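(* Let $v$ be any vertex of a Euclidean minimum spanning tree of a finite point set in the plane. Then: (i) if $\deg(v)=3$, there exists an angle at $v$ that is at most $120^\circ$; (ii) if $\deg(v)=4$, there exist two nonadjacent angles at $v$ that are at most $90^\circ$ and $120^\circ$, respectively; (iii) if $\deg(v)=5$, then all angles at $v$ are at most $120^\circ$, and there exist two nonadjacent angles at $v$ that are at most $90^\circ$.
   Context: Angles are measured in degrees. For a vertex $v$ of degree at least $3$ in the minimum spanning tree, sort its incident edges radially around $v$; an angle at $v$ is the angle between two radially consecutive incident edges. Two angles at $v$ are adjacent if they share a bounding edge, and nonadjacent otherwise. $\deg(v)$ denotes the degree of $v$ in the tree. *)

theory Defs
  imports "HOL-Analysis.Analysis"
begin

text \<open>Points of the plane are complex numbers. An undirected edge is a two-element set.\<close>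

definition tree_rel :: "complex set set \<Rightarrow> (complex \<times> complex) set" where
  "tree_rel T = {(x, y). {x, y} \<in> T}"

text \<open>A spanning tree of P: edges are pairs of distinct points of P, the graph is connected
 on P, and it is acyclic (every edge is a bridge: removing it disconnects its endpoints).\<close>
definition spanning_tree :: "complex set \<Rightarrow> complex set set \<Rightarrow> bool" where
  "spanning_tree P T \<longleftrightarrow>
     (\<forall>e\<in>T. \<exists>a b. e = {a, b} \<and> a \<noteq> b \<and> a \<in> P \<and> b \<in> P) \<and>
     (\<forall>a\<in>P. \<forall>b\<in>P. (a, b) \<in> (tree_rel T)\<^sup>*) \<and>
     (\<forall>e\<in>T. \<forall>a b. e = {a, b} \<longrightarrow> (a, b) \<notin> (tree_rel (T - {e}))\<^sup>*)"

definition edge_len :: "complex set \<Rightarrow> real" where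
  "edge_len e = (THE d. \<exists>a b. e = {a, b} \<and> d = dist a b)"

definition tree_weight :: "complex set set \<Rightarrow> real" where
  "tree_weight T = (\<Sum>e\<in>T. edge_len e)"

definition euclidean_mst :: "complex set \<Rightarrow> complex set set \<Rightarrow> bool" where
  "euclidean_mst P T \<longleftrightarrow> spanning_tree P T \<and>
     (\<forall>T'. spanning_tree P T' \<longrightarrow> tree_weight T \<le> tree_weight T')"

definition nbrs :: "complex set set \<Rightarrow> complex \<Rightarrow> complex set" where
  "nbrs T v = {u. {v, u} \<in> T}"

text \<open>us is the list of neighbours of v in radial (counterclockwise) order, i.e. sorted by the
 direction angle Arg (u - v).\<close>
definition angle_at :: "complex \<Rightarrow> complex list \<Rightarrow> nat \<Rightarrow> real" where
  "angle_at v us i = (180 / pi) *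
     (if Suc i < length us then Arg (us ! Suc i - v) - Arg (us ! i - v)
      else 2 * pi + Arg (us ! 0 - v) - Arg (us ! i - v))"

definition bounding_edges :: "nat \<Rightarrow> nat \<Rightarrow> nat set" where
  "bounding_edges k i = {i, Suc i mod k}"

definition nonadjacent_angles :: "nat \<Rightarrow> nat \<Rightarrow> nat \<Rightarrow> bool" where
  "nonadjacent_angles k i j \<longleftrightarrow> i \<noteq> j \<and> bounding_edges k i \<inter> bounding_edges k j = {}"

end

(*
  If {v, a} and {v, b} are edges of a Euclidean minimum spanning tree, exchanging {v, b} for
  {a, b} yields a connected graph, hence |vb| <= |ab|; symmetrically |va| <= |ab|. So in the
  triangle vab the angle at v faces a longest side and is at least 60 degrees. The angles
  around v sum to 360 degrees, and with every angle at least 60 degrees, elementary counting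
  gives the bounds for degrees 3, 4 and 5.
*)
theory Submission
  imports Defs
begin

definition simple_edges :: "complex set \<Rightarrow> complex set set \<Rightarrow> bool" where
  "simple_edges P G \<longleftrightarrow> (\<forall>e\<in>G. \<exists>a b. e = {a, b} \<and> a \<noteq> b \<and> a \<in> P \<and> b \<in> P)"

definition connected_on :: "complex set \<Rightarrow> complex set set \<Rightarrow> bool" where
  "connected_on P G \<longleftrightarrow> (\<forall>a\<in>P. \<forall>b\<in>P. (a, b) \<in> (tree_rel G)\<^sup>*)"

lemma spanning_tree_iff:
  "spanning_tree P T \<longleftrightarrow> simple_edges P T \<and> connected_on P T \<and>
     (\<forall>e\<in>T. \<forall>a b. e = {a, b} \<longrightarrow> (a, b) \<notin> (tree_rel (T - {e}))\<^sup>*)"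
  unfolding spanning_tree_def simple_edges_def connected_on_def ..

lemma finite_simple_edges:
  assumes "finite P" "simple_edges P G"
  shows "finite G"
proof -
  have "G \<subseteq> Pow P" using assms(2) unfolding simple_edges_def by auto
  then show ?thesis using assms(1) by (meson finite_Pow_iff finite_subset)
qed

lemma edge_len_doubleton: "edge_len {x, y} = dist x y"
  unfolding edge_len_def
  by (rule the_equality) (auto simp: doubleton_eq_iff dist_commute)

lemma edge_len_nonneg: "simple_edges P G \<Longrightarrow> e \<in> G \<Longrightarrow> 0 \<le> edge_len e"
  unfolding simple_edges_def by (auto simp: edge_len_doubleton)

lemma sym_rtrancl_tree_rel: "sym ((tree_rel G)\<^sup>*)"
  by (rule sym_rtrancl) (auto simp: sym_def tree_rel_def insert_commute)

lemma tree_rel_doubleton_path: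
  "(a, b) \<in> (tree_rel G)\<^sup>* \<Longrightarrow> {x, y} = {a, b} \<Longrightarrow> (x, y) \<in> (tree_rel G)\<^sup>*"
  using sym_rtrancl_tree_rel by (auto simp: doubleton_eq_iff dest: symD)

lemma connected_on_if_edges_joined:
  assumes "connected_on P G" and "\<And>x y. {x, y} \<in> G \<Longrightarrow> (x, y) \<in> (tree_rel G')\<^sup>*"
  shows "connected_on P G'"
proof -
  have "tree_rel G \<subseteq> (tree_rel G')\<^sup>*"
    using assms(2) by (auto simp: tree_rel_def)
  then show ?thesis
    using assms(1) rtrancl_subset_rtrancl unfolding connected_on_def by blast
qed

lemma connected_on_Diff_cycle_edge:
  assumes "connected_on P G" and "(a, b) \<in> (tree_rel (G - {{a, b}}))\<^sup>*"
  shows "connected_on P (G - {{a, b}})"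
  using assms(1)
proof (rule connected_on_if_edges_joined)
  fix x y assume "{x, y} \<in> G"
  then show "(x, y) \<in> (tree_rel (G - {{a, b}}))\<^sup>*"
  proof (cases "{x, y} = {a, b}")
    case True
    with assms(2) show ?thesis by (rule tree_rel_doubleton_path)
  qed (auto simp: tree_rel_def)
qed

lemma spanning_subtree_exists:
  assumes "finite P" "simple_edges P G" "connected_on P G"
  shows "\<exists>T. T \<subseteq> G \<and> spanning_tree P T"
  using assms(2,3)
proof (induction "card G" arbitrary: G rule: less_induct)
  case less
  show ?case
  proof (cases "\<forall>e\<in>G. \<forall>a b. e = {a, b} \<longrightarrow> (a, b) \<notin> (tree_rel (G - {e}))\<^sup>*")
    case True
    with less.prems show ?thesis by (auto simp: spanning_tree_iff)
  next
    case False
    then obtain a b where ab: "{a, b} \<in> G" "(a, b) \<in> (tree_rel (G - {{a, b}}))\<^sup>*" by blast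
    have "card (G - {{a, b}}) < card G"
      using ab(1) finite_simple_edges[OF assms(1) less.prems(1)] by (rule card_Diff1_less[rotated])
    moreover have "simple_edges P (G - {{a, b}})"
      using less.prems(1) unfolding simple_edges_def by blast
    moreover have "connected_on P (G - {{a, b}})"
      using less.prems(2) ab(2) by (rule connected_on_Diff_cycle_edge)
    ultimately show ?thesis using less.hyps by blast
  qed
qed

lemma euclidean_mst_exchange:
  assumes "finite P" "euclidean_mst P T" "{v, a} \<in> T" "{v, b} \<in> T" "a \<noteq> b"
  shows "dist v b \<le> dist a b"
proof -
  have T: "simple_edges P T" "connected_on P T"
    using assms(2) by (auto simp: euclidean_mst_def spanning_tree_iff)
  have "a \<in> P" "b \<in> P"
    using T(1) assms(3,4) unfolding simple_edges_def by (auto simp: doubleton_eq_iff)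
  define G where "G = insert {a, b} (T - {{v, b}})"
  have G: "simple_edges P G"
    using T(1) \<open>a \<in> P\<close> \<open>b \<in> P\<close> assms(5) unfolding G_def simple_edges_def by blast
  have "connected_on P G"
    using T(2)
  proof (rule connected_on_if_edges_joined)
    fix x y assume "{x, y} \<in> T"
    show "(x, y) \<in> (tree_rel G)\<^sup>*"
    proof (cases "{x, y} = {v, b}")
      case True
      have "{v, a} \<noteq> {v, b}" using assms(5) by (auto simp: doubleton_eq_iff)
      then have "(v, a) \<in> tree_rel G" "(a, b) \<in> tree_rel G"
        using assms(3) unfolding G_def tree_rel_def by auto
      then have "(v, b) \<in> (tree_rel G)\<^sup>*" by auto
      then show ?thesis using True by (rule tree_rel_doubleton_path)
    qed (use \<open>{x, y} \<in> T\<close> in \<open>auto simp: G_def tree_rel_def\<close>)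
  qed
  then obtain T' where T': "T' \<subseteq> G" "spanning_tree P T'"
    using spanning_subtree_exists[OF assms(1) G] by blast
  have fin: "finite T" "finite G"
    using finite_simple_edges[OF assms(1)] T(1) G by auto
  have "tree_weight T \<le> tree_weight T'"
    using assms(2) T'(2) unfolding euclidean_mst_def by blast
  also have "\<dots> \<le> tree_weight G"
    unfolding tree_weight_def using fin T'(1) edge_len_nonneg[OF G] by (intro sum_mono2) auto
  also have "\<dots> \<le> dist a b + sum edge_len (T - {{v, b}})"
    unfolding tree_weight_def G_def
    using fin edge_len_nonneg[OF T(1)] sum_nonneg[of "T - {{v, b}}" edge_len]
    by (auto simp: sum.insert_if edge_len_doubleton)
  also have "\<dots> = dist a b + tree_weight T - dist v b"
    unfolding tree_weight_def using fin assms(4) by (simp add: sum_diff1 edge_len_doubleton)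
  finally show ?thesis by simp
qed

lemma Re_mult_cnj_eq_cos_Arg_diff: "Re (z * cnj w) = cmod z * cmod w * cos (Arg z - Arg w)"
proof -
  have "Re (z * cnj w) = Re (rcis (cmod z) (Arg z) * cnj (rcis (cmod w) (Arg w)))"
    by (simp only: rcis_cmod_Arg)
  then show ?thesis by (simp add: cos_diff algebra_simps)
qed

lemma cmod_diff_squared: "(cmod (z - w))\<^sup>2 = (cmod z)\<^sup>2 + (cmod w)\<^sup>2 - 2 * Re (z * cnj w)"
  unfolding cmod_power2 by (simp add: power2_eq_square algebra_simps)

lemma cos_Arg_diff_le_half:
  assumes "z \<noteq> 0" "w \<noteq> 0" "cmod z \<le> cmod (z - w)" "cmod w \<le> cmod (z - w)"
  shows "cos (Arg z - Arg w) \<le> 1 / 2"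
proof -
  have pos: "0 < cmod z" "0 < cmod w" using assms(1,2) by auto
  have "(cmod z)\<^sup>2 \<le> (cmod (z - w))\<^sup>2" "(cmod w)\<^sup>2 \<le> (cmod (z - w))\<^sup>2"
    using assms(3,4) by (auto intro: power_mono)
  then have "2 * (cmod z * cmod w * cos (Arg z - Arg w)) \<le> min ((cmod z)\<^sup>2) ((cmod w)\<^sup>2)"
    using cmod_diff_squared[of z w, unfolded Re_mult_cnj_eq_cos_Arg_diff] by linarith
  also have "\<dots> \<le> cmod z * cmod w"
    using pos by (auto simp: power2_eq_square min_le_iff_disj intro: mult_right_mono mult_left_mono)
  finally have "cmod z * cmod w * (2 * cos (Arg z - Arg w)) \<le> cmod z * cmod w * 1"
    by simp
  then show ?thesis using pos by (simp add: mult_le_cancel_left_pos)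
qed

lemma pi_div_3_le_if_cos_le_half:
  assumes "0 \<le> d" "cos d \<le> 1 / 2"
  shows "pi / 3 \<le> d"
proof (rule ccontr)
  assume "\<not> pi / 3 \<le> d"
  then have "cos (pi / 3) < cos d" using assms(1) by (intro cos_monotone_0_pi) auto
  then show False using assms(2) by (simp add: cos_60)
qed

lemma angle_at_sum:
  assumes "us \<noteq> []"
  shows "(\<Sum>i<length us. angle_at v us i) = 360"
proof -
  define f where "f i = Arg (us ! i - v)" for i
  obtain m where m: "length us = Suc m" using assms by (cases us) auto
  have "(\<Sum>i<length us. angle_at v us i) =
      (\<Sum>i<m. 180 / pi * (f (Suc i) - f i)) + 180 / pi * (2 * pi + f 0 - f m)"
    unfolding m sum.lessThan_Suc by (simp add: angle_at_def f_def m)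
  also have "\<dots> = 180 / pi * ((f m - f 0) + (2 * pi + f 0 - f m))"
    by (simp only: sum_distrib_left[symmetric] sum_lessThan_telescope distrib_left)
  also have "\<dots> = 360" by simp
  finally show ?thesis .
qed

lemma
  assumes "sorted (map (\<lambda>u. Arg (u - v)) us)" "i < length us"
  shows angle_at_nonneg: "0 \<le> angle_at v us i"
    and cos_angle_at: "cos (pi / 180 * angle_at v us i) =
      cos (Arg (us ! (Suc i mod length us) - v) - Arg (us ! i - v))"
proof -
  define \<theta> where "\<theta> = (if Suc i < length us then Arg (us ! Suc i - v) - Arg (us ! i - v)
      else 2 * pi + Arg (us ! 0 - v) - Arg (us ! i - v))"
  have deg: "angle_at v us i = 180 / pi * \<theta>" by (simp add: angle_at_def \<theta>_def)
  have "0 \<le> \<theta> \<and> cos \<theta> = cos (Arg (us ! (Suc i mod length us) - v) - Arg (us ! i - v))"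
  proof (cases "Suc i < length us")
    case True
    then have "Arg (us ! i - v) \<le> Arg (us ! Suc i - v)"
      using sorted_nth_mono[OF assms(1), of i "Suc i"] by simp
    with True show ?thesis by (simp add: \<theta>_def)
  next
    case False
    then have "Suc i = length us" using assms(2) by simp
    moreover have "- pi < Arg (us ! 0 - v)" "Arg (us ! i - v) \<le> pi"
      using Arg_bounded by auto
    moreover have "2 * pi + Arg (us ! 0 - v) - Arg (us ! i - v) =
        (Arg (us ! 0 - v) - Arg (us ! i - v)) + 2 * pi" by simp
    ultimately show ?thesis by (simp only: \<theta>_def if_False False cos_periodic) simp
  qed
  then show "0 \<le> angle_at v us i"
    and "cos (pi / 180 * angle_at v us i) =
      cos (Arg (us ! (Suc i mod length us) - v) - Arg (us ! i - v))"
    by (simp_all add: deg)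
qed

lemma euclidean_mst_angle_ge_60:
  assumes "finite P" "euclidean_mst P T" "distinct us" "set us = nbrs T v"
    and "sorted (map (\<lambda>u. Arg (u - v)) us)" "2 \<le> length us" "i < length us"
  shows "60 \<le> angle_at v us i"
proof -
  define j where "j = Suc i mod length us"
  have j: "j < length us" "j \<noteq> i"
    using assms(6,7) unfolding j_def by (auto simp: mod_Suc)
  define a b where "a = us ! i" and "b = us ! j"
  have "a \<noteq> b" unfolding a_def b_def using assms(3,7) j nth_eq_iff_index_eq by metis
  have edges: "{v, a} \<in> T" "{v, b} \<in> T"
    using assms(4,7) j unfolding a_def b_def nbrs_def by (metis mem_Collect_eq nth_mem)+
  then have "a \<noteq> v" "b \<noteq> v"
    using assms(2) by (auto simp: euclidean_mst_def spanning_tree_def doubleton_eq_iff)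
  moreover have "dist v b \<le> dist a b" "dist v a \<le> dist a b"
    using euclidean_mst_exchange[OF assms(1,2) edges \<open>a \<noteq> b\<close>]
      euclidean_mst_exchange[OF assms(1,2) edges(2,1)] \<open>a \<noteq> b\<close> by (auto simp: dist_commute)
  ultimately have "cos (Arg (b - v) - Arg (a - v)) \<le> 1 / 2"
    by (intro cos_Arg_diff_le_half) (auto simp: dist_norm norm_minus_commute)
  then have "pi / 3 \<le> pi / 180 * angle_at v us i"
    using angle_at_nonneg[OF assms(5,7)] cos_angle_at[OF assms(5,7)]
    by (intro pi_div_3_le_if_cos_le_half) (simp_all add: a_def b_def j_def)
  then show ?thesis by (simp add: field_simps)
qed

lemma ex_lessThan_le_average:
  fixes \<alpha> :: "nat \<Rightarrow> real"
  assumes "0 < k"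
  shows "\<exists>i<k. \<alpha> i \<le> (\<Sum>i<k. \<alpha> i) / k"
proof (rule ccontr)
  assume "\<not> ?thesis"
  then have "(\<Sum>i<k. (\<Sum>i<k. \<alpha> i) / k) < (\<Sum>i<k. \<alpha> i)"
    using assms by (intro sum_strict_mono) auto
  then show False using assms by simp
qed

lemma le_sum_minus_lower_bounds:
  fixes \<alpha> :: "nat \<Rightarrow> real"
  assumes "\<forall>i<k. m \<le> \<alpha> i" "j < k"
  shows "\<alpha> j \<le> (\<Sum>i<k. \<alpha> i) - (k - 1) * m"
proof -
  have "real (card ({..<k} - {j})) * m \<le> (\<Sum>i\<in>{..<k} - {j}. \<alpha> i)"
    using assms(1) by (intro sum_bounded_below) auto
  moreover have "(\<Sum>i<k. \<alpha> i) = \<alpha> j + (\<Sum>i\<in>{..<k} - {j}. \<alpha> i)"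
    using assms(2) by (simp add: sum.remove)
  ultimately show ?thesis using assms(2) by (simp add: of_nat_diff)
qed

lemma four_angles_nonadjacent_le_90_120:
  fixes \<alpha> :: "nat \<Rightarrow> real"
  assumes "\<forall>i<4. 60 \<le> \<alpha> i" "(\<Sum>i<4. \<alpha> i) = 360"
  shows "\<exists>i<4. \<exists>j<4. nonadjacent_angles 4 i j \<and> \<alpha> i \<le> 90 \<and> \<alpha> j \<le> 120"
proof -
  have "\<alpha> 0 + \<alpha> 1 + \<alpha> 2 + \<alpha> 3 = 360"
    using assms(2) by (simp add: eval_nat_numeral)
  moreover have "60 \<le> \<alpha> 0" "60 \<le> \<alpha> 1" "60 \<le> \<alpha> 2" "60 \<le> \<alpha> 3"
    using assms(1) by auto
  ultimately have "(\<alpha> 0 \<le> 90 \<and> \<alpha> 2 \<le> 120) \<or> (\<alpha> 2 \<le> 90 \<and> \<alpha> 0 \<le> 120) \<or>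
      (\<alpha> 1 \<le> 90 \<and> \<alpha> 3 \<le> 120) \<or> (\<alpha> 3 \<le> 90 \<and> \<alpha> 1 \<le> 120)"
    by linarith
  moreover have "nonadjacent_angles 4 0 2" "nonadjacent_angles 4 2 0"
    "nonadjacent_angles 4 1 3" "nonadjacent_angles 4 3 1"
    "(0::nat) < 4" "(1::nat) < 4" "(2::nat) < 4" "(3::nat) < 4"
    by (auto simp: nonadjacent_angles_def bounding_edges_def)
  ultimately show ?thesis by blast
qed

text \<open>Otherwise the angles of at most \<open>90\<close> would be cyclically consecutive, hence at most two,
  and the other three would add up to more than \<open>270\<close>, leaving less than \<open>90\<close> for the
  remaining two angles of at least \<open>60\<close> each.\<close>
lemma five_angles_nonadjacent_le_90:
  fixes \<alpha> :: "nat \<Rightarrow> real"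
  assumes "\<forall>i<5. 60 \<le> \<alpha> i" "(\<Sum>i<5. \<alpha> i) = 360"
  shows "\<exists>i<5. \<exists>j<5. nonadjacent_angles 5 i j \<and> \<alpha> i \<le> 90 \<and> \<alpha> j \<le> 90"
proof -
  have "\<alpha> 0 + \<alpha> 1 + \<alpha> 2 + \<alpha> 3 + \<alpha> 4 = 360"
    using assms(2) by (simp add: eval_nat_numeral)
  moreover have "60 \<le> \<alpha> 0" "60 \<le> \<alpha> 1" "60 \<le> \<alpha> 2" "60 \<le> \<alpha> 3" "60 \<le> \<alpha> 4"
    using assms(1) by auto
  ultimately have "(\<alpha> 0 \<le> 90 \<and> \<alpha> 2 \<le> 90) \<or> (\<alpha> 0 \<le> 90 \<and> \<alpha> 3 \<le> 90) \<or>
      (\<alpha> 1 \<le> 90 \<and> \<alpha> 3 \<le> 90) \<or> (\<alpha> 1 \<le> 90 \<and> \<alpha> 4 \<le> 90) \<or> (\<alpha> 2 \<le> 90 \<and> \<alpha> 4 \<le> 90)"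
    by linarith
  moreover have "nonadjacent_angles 5 0 2" "nonadjacent_angles 5 0 3" "nonadjacent_angles 5 1 3"
    "nonadjacent_angles 5 1 4" "nonadjacent_angles 5 2 4"
    "(0::nat) < 5" "(1::nat) < 5" "(2::nat) < 5" "(3::nat) < 5" "(4::nat) < 5"
    by (auto simp: nonadjacent_angles_def bounding_edges_def)
  ultimately show ?thesis by blast
qed

theorem lemma1:
  fixes P :: "complex set" and T :: "complex set set" and v :: complex and us :: "complex list"
  assumes "finite P"
    and "euclidean_mst P T"
    and "v \<in> P"
    and "distinct us"
    and "set us = nbrs T v"
    and "sorted (map (\<lambda>u. Arg (u - v)) us)"
  shows "(length us = 3 \<longrightarrow> (\<exists>i<3. angle_at v us i \<le> 120)) \<and>
         (length us = 4 \<longrightarrow> (\<exists>i<4. \<exists>j<4. nonadjacent_angles 4 i j \<and>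
              angle_at v us i \<le> 90 \<and> angle_at v us j \<le> 120)) \<and>
         (length us = 5 \<longrightarrow> (\<forall>i<5. angle_at v us i \<le> 120) \<and>
              (\<exists>i<5. \<exists>j<5. nonadjacent_angles 5 i j \<and>
              angle_at v us i \<le> 90 \<and> angle_at v us j \<le> 90))"
proof -
  let ?\<alpha> = "angle_at v us"
  have sum: "(\<Sum>i<length us. ?\<alpha> i) = 360" if "length us \<ge> 3"
    using that by (intro angle_at_sum) auto
  have ge_60: "\<forall>i<length us. 60 \<le> ?\<alpha> i" if "length us \<ge> 3"
    using that euclidean_mst_angle_ge_60[OF assms(1,2,4,5,6)] by simp
  have "\<exists>i<3. ?\<alpha> i \<le> 120" if "length us = 3"
    using ex_lessThan_le_average[of 3 ?\<alpha>] sum that by simp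
  moreover have "\<exists>i<4. \<exists>j<4. nonadjacent_angles 4 i j \<and> ?\<alpha> i \<le> 90 \<and> ?\<alpha> j \<le> 120"
    if "length us = 4"
    using four_angles_nonadjacent_le_90_120 sum ge_60 that by simp
  moreover have "\<forall>i<5. ?\<alpha> i \<le> 120" if "length us = 5"
    using le_sum_minus_lower_bounds[of 5 60 ?\<alpha>] sum ge_60 that by simp
  moreover have "\<exists>i<5. \<exists>j<5. nonadjacent_angles 5 i j \<and> ?\<alpha> i \<le> 90 \<and> ?\<alpha> j \<le> 90"
    if "length us = 5"
    using five_angles_nonadjacent_le_90 sum ge_60 that by simp
  ultimately show ?thesis by blast
qed

end
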